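(* For every $\epsilon>0$ there is $\eta>0$ such that for all sufficiently large $n$ the following holds. If $H$ is a $4$-uniform hypergraph on $n$ vertices containing no copy of ${\cal C}^{(4)}_3$ with $e(H)>b(n)-\eta n^4$, then there is a partition $V(H)=V_1\cup V_2$ such that all but at most $\epsilon n^4$ of the $4$-element subsets of $V(H)$ are correct with respect to this partition.
   Context: ${\cal C}^{(4)}_3$ is the $4$-uniform hypergraph with vertices $a,b,c,d,e,f$ and the three edges $abcd, abef, cdef$. For $n$ and $t$ with $n/2+t$ a nonnegative integer and $|t|\le n/2$, ${\cal B}(n,t)$ is the $4$-uniform hypergraph on $n$ vertices partitioned into parts of sizes $n/2+t$ and $n/2-t$ whose edges are all $4$-sets having exactly $1$ vertex in one part and $3$ in the other; $b(n)$ is the maximum over admissible $t$ of the number of edges of ${\cal B}(n,t)$. Given a partition $V(H)=V_1\cup V_2$, a $4$-set is good if it has $1$ point in one of $V_1,V_2$ and $3$ in the other, and bad otherwise; it is correct (with respect to $H$) if it is either a good edge of $H$ or a bad non-edge of $H$, and incorrect otherwise. *)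

theory Defs
  imports Complex_Main
begin

definition uniform4 :: "'a set \<Rightarrow> 'a set set \<Rightarrow> bool" where
  "uniform4 V E \<longleftrightarrow> finite V \<and> (\<forall>S\<in>E. S \<subseteq> V \<and> card S = 4)"

definition contains_C3 :: "'a set set \<Rightarrow> bool" where
  "contains_C3 E \<longleftrightarrow> (\<exists>a b c d e f. distinct [a, b, c, d, e, f] \<and>
      {a, b, c, d} \<in> E \<and> {a, b, e, f} \<in> E \<and> {c, d, e, f} \<in> E)"

definition good4 :: "'a set \<Rightarrow> 'a set \<Rightarrow> 'a set \<Rightarrow> bool" where
  "good4 V1 V2 S \<longleftrightarrow> (card (S \<inter> V1) = 1 \<and> card (S \<inter> V2) = 3) \<or>
                      (card (S \<inter> V1) = 3 \<and> card (S \<inter> V2) = 1)"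

definition correct4 :: "'a set \<Rightarrow> 'a set \<Rightarrow> 'a set set \<Rightarrow> 'a set \<Rightarrow> bool" where
  "correct4 V1 V2 E S \<longleftrightarrow> (good4 V1 V2 S \<and> S \<in> E) \<or> (\<not> good4 V1 V2 S \<and> S \<notin> E)"

text \<open>Edge set of B(n,t) on vertex set {0..<n}, with parts {0..<k} and {k..<n}, k = n/2 + t.\<close>
definition B_edges :: "nat \<Rightarrow> nat \<Rightarrow> nat set set" where
  "B_edges n k = {S. S \<subseteq> {..<n} \<and> card S = 4 \<and> good4 {..<k} {k..<n} S}"

definition b :: "nat \<Rightarrow> nat" where
  "b n = Max {card (B_edges n k) | k. k \<le> n}"

end

(*
  Pairs of vertices form a graph in which (w, x) and (y, z) are adjacent when wxyz is an edge of H.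
  Forbidding C_3^(4) makes this pair graph triangle-free, and it has 24 e(H) ordered edges. As in the
  stability proof of Mantel's theorem, the neighbourhood of a pair of maximum degree is nearly a
  bipartition of the pair graph. In terms of H: the link graph f of that pair predicts that wxyz is
  an edge iff exactly one of wx, yz is an f-edge, and this fails for at most 3 n^4/2 - 72 e(H) ordered
  4-tuples. By averaging, f is then close to a Seidel switching of the complete or the empty graph,
  that is to a complete bipartite graph or its complement; for the resulting bipartition a 4-set is
  good iff exactly one of wx, yz crosses it, so at most 936 (n^4/48 - e(H)) 4-sets are incorrect.
  Finally b(n) >= n^4/48 - n^3/8, so this is at most epsilon n^4 when e(H) > b(n) - epsilon n^4/1872
  and n >= 234/epsilon.
*)

theory Submission
  imports Defs "HOL-Combinatorics.Multiset_Permutations"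
begin

lemma ex_le_average:
  fixes h :: "'a \<Rightarrow> 'b::{semiring_1,ordered_comm_monoid_add,linorder}"
  assumes "finite A" "A \<noteq> {}"
  shows "\<exists>u\<in>A. of_nat (card A) * h u \<le> sum h A"
proof -
  obtain u where "is_arg_min h (\<lambda>x. x \<in> A) u"
    using ex_is_arg_min_if_finite[OF assms] by blast
  then have "u \<in> A" "\<And>x. x \<in> A \<Longrightarrow> h u \<le> h x"
    by (auto simp: is_arg_min_linorder)
  then show ?thesis by (blast intro: sum_bounded_below)
qed

lemma four_mult_le_square_add: "4 * (a * b) \<le> (a + b)^2" for a b :: nat
proof -
  have "(int a + int b)^2 = (int a - int b)^2 + 4 * (int a * int b)"
    by (simp add: power2_eq_square algebra_simps)
  then have "4 * (int a * int b) \<le> (int a + int b)^2" by simp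
  then show ?thesis by (simp flip: of_nat_mult of_nat_add of_nat_power)
qed

lemma card_filter_add_compl:
  "finite V \<Longrightarrow> card {y \<in> V. h y} + card {y \<in> V. \<not> h y} = card V"
  by (subst card_Un_disjoint[symmetric]) (auto intro: arg_cong[where f = card])

lemma double_sum_of_bool_neq:
  assumes "finite V"
  shows "(\<Sum>y\<in>V. \<Sum>w\<in>V. of_bool (h y \<noteq> h w) :: nat) = 2 * (card {y \<in> V. h y} * card {y \<in> V. \<not> h y})"
proof -
  have "(\<Sum>w\<in>V. of_bool (h y \<noteq> h w) :: nat) = (if h y then card {w \<in> V. \<not> h w} else card {w \<in> V. h w})" for y
    using assms by (simp add: sum_of_bool_eq Int_def conj_commute)
  then show ?thesis
    using assms by (simp add: sum.If_cases Int_def conj_commute)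
qed

lemma ex_minority_bound:
  fixes h :: "'a \<Rightarrow> bool"
  assumes "finite V"
  shows "\<exists>c. card V * card {y \<in> V. h y \<noteq> c} \<le> (\<Sum>y\<in>V. \<Sum>w\<in>V. of_bool (h y \<noteq> h w))"
proof -
  let ?P = "card {y \<in> V. h y}" and ?Q = "card {y \<in> V. \<not> h y}"
  have V: "card V = ?P + ?Q" and sum: "(\<Sum>y\<in>V. \<Sum>w\<in>V. of_bool (h y \<noteq> h w)) = 2 * (?P * ?Q)"
    using card_filter_add_compl[OF assms] double_sum_of_bool_neq[OF assms] by simp_all
  show ?thesis
  proof (cases "?Q \<le> ?P")
    case True
    then have "?Q * ?Q \<le> ?P * ?Q" by (rule mult_right_mono) simp
    then have "card V * ?Q \<le> 2 * (?P * ?Q)"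
      unfolding V add_mult_distrib by simp
    then show ?thesis
      unfolding sum by (intro exI[of _ True]) simp
  next
    case False
    then have "?P * ?P \<le> ?P * ?Q" by (intro mult_left_mono) simp_all
    then have "card V * ?P \<le> 2 * (?P * ?Q)"
      unfolding V add_mult_distrib2 by simp
    then show ?thesis
      unfolding sum by (intro exI[of _ False]) simp
  qed
qed

lemma card_subsets_split:
  assumes "finite L" "finite R" "L \<inter> R = {}"
  shows "card {S. S \<subseteq> L \<union> R \<and> card (S \<inter> L) = i \<and> card (S \<inter> R) = j}
    = (card L choose i) * (card R choose j)"
proof -
  have parts: "(X \<union> Y) \<inter> L = X" "(X \<union> Y) \<inter> R = Y" if "X \<subseteq> L" "Y \<subseteq> R" for X Y
    using that assms(3) by blast+
  have "bij_betw (\<lambda>S. (S \<inter> L, S \<inter> R)) {S. S \<subseteq> L \<union> R \<and> card (S \<inter> L) = i \<and> card (S \<inter> R) = j}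
      ({X. X \<subseteq> L \<and> card X = i} \<times> {Y. Y \<subseteq> R \<and> card Y = j})"
    by (rule bij_betw_byWitness[where f' = "\<lambda>(X, Y). X \<union> Y"]) (use parts in auto)
  then show ?thesis
    using assms by (simp add: bij_betw_same_card card_cartesian_product n_subsets)
qed

lemma distinct_if_card_eq_4:
  assumes "card {w, x, y, z} = 4"
  shows "distinct [w, x, y, z]"
  using assms by (intro card_distinct) simp

lemma card_eq_4E:
  assumes "card S = 4"
  obtains w x y z where "S = {w, x, y, z}" "distinct [w, x, y, z]"
proof -
  have "card S = Suc (Suc (Suc (Suc 0)))" using assms by simp
  then show ?thesis
    using that by (auto simp: card_Suc_eq)
qed

lemma card_quadruples_spanning:
  assumes "card S = 4"
  shows "card {((w, x), (y, z)). {w, x, y, z} = S} = 24"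
proof -
  have "finite S" using assms by (intro card_ge_0_finite) simp
  have list_eq: "xs = [xs ! 0, xs ! 1, xs ! 2, xs ! 3]" if "xs \<in> permutations_of_set S" for xs
  proof -
    have "length xs = 4"
      using that assms distinct_card by (fastforce simp: permutations_of_set_def)
    then show ?thesis by (simp add: list_eq_iff_nth_eq nth_Cons' less_Suc_eq numeral_eq_Suc)
  qed
  have "bij_betw (\<lambda>((w, x), (y, z)). [w, x, y, z]) {((w, x), (y, z)). {w, x, y, z} = S}
      (permutations_of_set S)"
  proof (rule bij_betw_byWitness[where f' = "\<lambda>xs. ((xs ! 0, xs ! 1), (xs ! 2, xs ! 3))"])
    show "(\<lambda>((w, x), (y, z)). [w, x, y, z]) ` {((w, x), (y, z)). {w, x, y, z} = S}
        \<subseteq> permutations_of_set S"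
      using assms by (auto simp: permutations_of_set_def simp del: distinct.simps intro!: distinct_if_card_eq_4)
    show "\<forall>xs\<in>permutations_of_set S. (\<lambda>((w, x), (y, z)). [w, x, y, z]) ((xs ! 0, xs ! 1), (xs ! 2, xs ! 3)) = xs"
      using list_eq by simp
    show "(\<lambda>xs. ((xs ! 0, xs ! 1), (xs ! 2, xs ! 3))) ` permutations_of_set S \<subseteq> {((w, x), (y, z)). {w, x, y, z} = S}"
    proof clarify
      fix xs assume xs: "xs \<in> permutations_of_set S"
      have "{xs ! 0, xs ! 1, xs ! 2, xs ! 3} = set [xs ! 0, xs ! 1, xs ! 2, xs ! 3]" by simp
      also have "\<dots> = set xs" by (simp only: list_eq[OF xs, symmetric])
      also have "\<dots> = S" using xs by (simp add: permutations_of_set_def)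
      finally show "{xs ! 0, xs ! 1, xs ! 2, xs ! 3} = S" .
    qed
  qed auto
  then show ?thesis
    using \<open>finite S\<close> assms by (simp add: bij_betw_same_card fact_numeral)
qed

lemma sum_square_cartesian:
  "(\<Sum>p\<in>V \<times> V. \<Sum>q\<in>V \<times> V. h p q) = (\<Sum>w\<in>V. \<Sum>x\<in>V. \<Sum>y\<in>V. \<Sum>z\<in>V. h (w, x) (y, z))"
  by (simp add: sum.cartesian_product')

lemma sum_nonneighbour_degrees_le:
  fixes adj :: "'p \<Rightarrow> 'p \<Rightarrow> bool"
  assumes "finite P"
    and max_degree: "\<And>p. p \<in> P \<Longrightarrow> (\<Sum>q\<in>P. of_bool (adj p q)) \<le> (\<Sum>q\<in>P. of_bool (adj v q) :: nat)"
  shows "(\<Sum>p\<in>P. \<Sum>q\<in>P. of_bool (\<not> adj v p \<and> adj p q) :: nat)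
    \<le> card {q \<in> P. adj v q} * card {q \<in> P. \<not> adj v q}"
proof -
  let ?deg = "\<lambda>p. \<Sum>q\<in>P. of_bool (adj p q) :: nat"
  have "(\<Sum>p\<in>P. \<Sum>q\<in>P. of_bool (\<not> adj v p \<and> adj p q) :: nat) = (\<Sum>p\<in>P. if \<not> adj v p then ?deg p else 0)"
    by (intro sum.cong) auto
  also have "\<dots> = (\<Sum>p\<in>{q \<in> P. \<not> adj v q}. ?deg p)"
    by (simp only: sum.inter_filter[OF assms(1)])
  also have "\<dots> \<le> card {q \<in> P. \<not> adj v q} * ?deg v"
    using sum_bounded_above[of "{q \<in> P. \<not> adj v q}" ?deg "?deg v"] max_degree by simp
  also have "?deg v = card {q \<in> P. adj v q}"
    using assms(1) by (simp add: Int_def)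
  finally show ?thesis by (simp add: mult.commute)
qed

lemma triangle_free_near_bipartite:
  fixes P :: "'p set" and adj :: "'p \<Rightarrow> 'p \<Rightarrow> bool"
  assumes "finite P" "P \<noteq> {}" and sym: "\<And>p q. adj p q \<Longrightarrow> adj q p"
    and triangle_free: "\<And>p q r. p \<in> P \<Longrightarrow> q \<in> P \<Longrightarrow> r \<in> P \<Longrightarrow> adj p q \<Longrightarrow> adj p r \<Longrightarrow> adj q r \<Longrightarrow> False"
  shows "\<exists>v\<in>P. 2 * (\<Sum>p\<in>P. \<Sum>q\<in>P. of_bool (adj p q \<noteq> (adj v p \<noteq> adj v q)))
                 + 6 * (\<Sum>p\<in>P. \<Sum>q\<in>P. of_bool (adj p q)) \<le> 3 * card P ^ 2"
proof -
  let ?deg = "\<lambda>p. \<Sum>q\<in>P. of_bool (adj p q) :: nat"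
  have "Max (?deg ` P) \<in> ?deg ` P" using assms(1,2) by simp
  then obtain v where "v \<in> P" and "?deg v = Max (?deg ` P)" by auto
  then have max_degree: "\<And>p. p \<in> P \<Longrightarrow> ?deg p \<le> ?deg v"
    using assms(1) by simp
  let ?N = "card {q \<in> P. adj v q}" and ?B = "card {q \<in> P. \<not> adj v q}"
  let ?out = "\<lambda>p q. of_bool (\<not> adj v p \<and> adj p q) :: nat"
  have out: "(\<Sum>p\<in>P. \<Sum>q\<in>P. ?out p q) \<le> ?N * ?B"
    using sum_nonneighbour_degrees_le[where adj = adj and v = v, OF assms(1) max_degree] .
  then have out': "(\<Sum>p\<in>P. \<Sum>q\<in>P. ?out q p) \<le> ?N * ?B"
    by (subst sum.swap)
  have pointwise: "of_bool (adj p q \<noteq> (adj v p \<noteq> adj v q)) + 3 * of_bool (adj p q)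
      \<le> 2 * (?out p q + ?out q p) + of_bool (adj v p \<noteq> adj v q)"
    if "p \<in> P" "q \<in> P" for p q
    using triangle_free[OF \<open>v \<in> P\<close> that] sym[of p q]
    by (cases "adj p q"; cases "adj v p"; cases "adj v q") auto
  have "(\<Sum>p\<in>P. \<Sum>q\<in>P. of_bool (adj p q \<noteq> (adj v p \<noteq> adj v q))) + 3 * (\<Sum>p\<in>P. \<Sum>q\<in>P. of_bool (adj p q))
      = (\<Sum>p\<in>P. \<Sum>q\<in>P. of_bool (adj p q \<noteq> (adj v p \<noteq> adj v q)) + 3 * of_bool (adj p q) :: nat)"
    by (simp add: sum.distrib sum_distrib_left)
  also have "\<dots> \<le> (\<Sum>p\<in>P. \<Sum>q\<in>P. 2 * (?out p q + ?out q p) + of_bool (adj v p \<noteq> adj v q))"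
    by (intro sum_mono pointwise)
  also have "\<dots> = 2 * ((\<Sum>p\<in>P. \<Sum>q\<in>P. ?out p q) + (\<Sum>p\<in>P. \<Sum>q\<in>P. ?out q p))
      + (\<Sum>p\<in>P. \<Sum>q\<in>P. of_bool (adj v p \<noteq> adj v q))"
    by (simp add: sum.distrib sum_distrib_left)
  finally have "(\<Sum>p\<in>P. \<Sum>q\<in>P. of_bool (adj p q \<noteq> (adj v p \<noteq> adj v q)))
      + 3 * (\<Sum>p\<in>P. \<Sum>q\<in>P. of_bool (adj p q)) \<le> 6 * (?N * ?B)"
    using out out' double_sum_of_bool_neq[OF assms(1), of "adj v"] by simp
  moreover have "4 * (?N * ?B) \<le> card P ^ 2"
    using four_mult_le_square_add card_filter_add_compl[OF assms(1), of "adj v"] by metis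
  ultimately show ?thesis using \<open>v \<in> P\<close> by (intro bexI[of _ v]) linarith+
qed

definition pair_graph :: "'a set set \<Rightarrow> 'a \<times> 'a \<Rightarrow> 'a \<times> 'a \<Rightarrow> bool" where
  "pair_graph E p q \<longleftrightarrow> {fst p, snd p, fst q, snd q} \<in> E"

lemma pair_graph_sym: "pair_graph E p q \<Longrightarrow> pair_graph E q p"
  unfolding pair_graph_def by (simp add: insert_commute)

lemma pair_graph_triangle_free:
  assumes "uniform4 V E" "\<not> contains_C3 E"
    and "pair_graph E p q" "pair_graph E p r" "pair_graph E q r"
  shows False
proof -
  have edge_distinct: "distinct [fst s, snd s, fst t, snd t]" if "pair_graph E s t" for s t
    using assms(1) that by (intro distinct_if_card_eq_4) (simp add: uniform4_def pair_graph_def)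
  have "distinct [fst p, snd p, fst q, snd q]" "distinct [fst p, snd p, fst r, snd r]"
    "distinct [fst q, snd q, fst r, snd r]"
    using assms(3-5) by (blast intro: edge_distinct)+
  then have "distinct [fst p, snd p, fst q, snd q, fst r, snd r]" by auto
  then have "contains_C3 E"
    using assms(3-5) unfolding contains_C3_def pair_graph_def by blast
  with assms(2) show False ..
qed

lemma sum_pair_graph:
  assumes "uniform4 V E"
  shows "(\<Sum>p\<in>V \<times> V. \<Sum>q\<in>V \<times> V. of_bool (pair_graph E p q) :: nat) = 24 * card E"
proof -
  have "finite V" and edge: "\<And>S. S \<in> E \<Longrightarrow> S \<subseteq> V \<and> card S = 4"
    using assms by (auto simp: uniform4_def)
  then have "finite E"
    by (metis Pow_iff finite_Pow_iff finite_subset subsetI)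
  let ?fibre = "\<lambda>S. {((w, x), (y, z)). {w, x, y, z} = S}"
  have "(\<Sum>p\<in>V \<times> V. \<Sum>q\<in>V \<times> V. of_bool (pair_graph E p q) :: nat)
      = card (SIGMA p:V \<times> V. {q \<in> V \<times> V. pair_graph E p q})"
    using \<open>finite V\<close> by (simp add: sum_of_bool_eq Int_def)
  also have "(SIGMA p:V \<times> V. {q \<in> V \<times> V. pair_graph E p q}) = (\<Union>S\<in>E. ?fibre S)"
    using edge by (fastforce simp: pair_graph_def)
  also have "card (\<Union>S\<in>E. ?fibre S) = (\<Sum>S\<in>E. card (?fibre S))"
  proof (rule card_UN_disjoint[OF \<open>finite E\<close>])
    show "\<forall>S\<in>E. finite (?fibre S)"
      using edge card_quadruples_spanning by (metis card_ge_0_finite zero_less_numeral)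
  qed auto
  also have "\<dots> = (\<Sum>S\<in>E. 24)"
    using edge card_quadruples_spanning by (intro sum.cong) auto
  also have "\<dots> = 24 * card E" by simp
  finally show ?thesis .
qed

text \<open>For the edge set of \<open>B(n,t)\<close> and the complete bipartite graph \<open>f\<close> between its parts,
  no 4-tuple of distinct vertices is a mismatch.\<close>

definition mismatch4 :: "'a set set \<Rightarrow> ('a \<Rightarrow> 'a \<Rightarrow> bool) \<Rightarrow> 'a \<Rightarrow> 'a \<Rightarrow> 'a \<Rightarrow> 'a \<Rightarrow> bool" where
  "mismatch4 E f w x y z \<longleftrightarrow> ({w, x, y, z} \<in> E) \<noteq> (f w x \<noteq> f y z)"

definition mismatches :: "'a set \<Rightarrow> 'a set set \<Rightarrow> ('a \<Rightarrow> 'a \<Rightarrow> bool) \<Rightarrow> nat" where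
  "mismatches V E f = (\<Sum>w\<in>V. \<Sum>x\<in>V. \<Sum>y\<in>V. \<Sum>z\<in>V. of_bool (mismatch4 E f w x y z))"

lemma ex_link_graph_few_mismatches:
  assumes "uniform4 V E" "\<not> contains_C3 E" "V \<noteq> {}"
  shows "\<exists>f. (\<forall>x y. f x y = f y x) \<and> 2 * mismatches V E f + 144 * card E \<le> 3 * card V ^ 4"
proof -
  have "finite V" using assms(1) by (simp add: uniform4_def)
  have "\<exists>v\<in>V \<times> V.
      2 * (\<Sum>p\<in>V \<times> V. \<Sum>q\<in>V \<times> V. of_bool (pair_graph E p q \<noteq> (pair_graph E v p \<noteq> pair_graph E v q)))
       + 6 * (\<Sum>p\<in>V \<times> V. \<Sum>q\<in>V \<times> V. of_bool (pair_graph E p q)) \<le> 3 * card (V \<times> V) ^ 2"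
  proof (rule triangle_free_near_bipartite)
    show "finite (V \<times> V)" "V \<times> V \<noteq> {}" using \<open>finite V\<close> assms(3) by auto
  qed (auto intro: pair_graph_sym pair_graph_triangle_free[OF assms(1,2)])
  then obtain v where v:
    "2 * (\<Sum>p\<in>V \<times> V. \<Sum>q\<in>V \<times> V. of_bool (pair_graph E p q \<noteq> (pair_graph E v p \<noteq> pair_graph E v q)))
       + 6 * (\<Sum>p\<in>V \<times> V. \<Sum>q\<in>V \<times> V. of_bool (pair_graph E p q)) \<le> 3 * card (V \<times> V) ^ 2"
    by blast
  define f where "f x y = pair_graph E v (x, y)" for x y
  have sym: "f x y = f y x" for x y
    by (simp add: f_def pair_graph_def insert_commute)
  have "mismatches V E f = (\<Sum>p\<in>V \<times> V. \<Sum>q\<in>V \<times> V.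
      of_bool (pair_graph E p q \<noteq> (pair_graph E v p \<noteq> pair_graph E v q)))"
    unfolding sum_square_cartesian by (simp add: mismatches_def mismatch4_def f_def pair_graph_def)
  moreover have "card (V \<times> V) ^ 2 = card V ^ 4"
    by (simp add: card_cartesian_product power2_eq_square power4_eq_xxxx)
  ultimately have "2 * mismatches V E f + 144 * card E \<le> 3 * card V ^ 4"
    using v sum_pair_graph[OF assms(1)] by simp
  with sym show ?thesis by blast
qed

definition switch :: "('a \<Rightarrow> 'a \<Rightarrow> bool) \<Rightarrow> ('a \<Rightarrow> bool) \<Rightarrow> 'a \<Rightarrow> 'a \<Rightarrow> bool" where
  "switch f \<sigma> x y \<longleftrightarrow> f x y \<noteq> (\<sigma> x \<noteq> \<sigma> y)"

lemma switch_disagreement_mismatch4: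
  assumes "switch f (f u) x y \<noteq> switch f (f u) x w"
  shows "mismatch4 E f u x y w \<or> mismatch4 E f u y x w \<or> mismatch4 E f u w x y"
proof -
  have "{u, y, x, w} = {u, x, y, w}" "{u, w, x, y} = {u, x, y, w}" by auto
  then show ?thesis
    using assms unfolding mismatch4_def switch_def by auto
qed

lemma sum_switch_disagreements_le:
  "(\<Sum>x\<in>V. \<Sum>y\<in>V. \<Sum>w\<in>V. of_bool (switch f (f u) x y \<noteq> switch f (f u) x w))
     \<le> 3 * (\<Sum>x\<in>V. \<Sum>y\<in>V. \<Sum>w\<in>V. of_bool (mismatch4 E f u x y w) :: nat)"
proof -
  let ?m = "\<lambda>x y w. of_bool (mismatch4 E f u x y w) :: nat"
  have "of_bool (switch f (f u) x y \<noteq> switch f (f u) x w) \<le> ?m x y w + ?m y x w + ?m w x y" for x y w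
    using switch_disagreement_mismatch4[of f u x y w E]
    by (cases "switch f (f u) x y = switch f (f u) x w") auto
  then have "(\<Sum>x\<in>V. \<Sum>y\<in>V. \<Sum>w\<in>V. of_bool (switch f (f u) x y \<noteq> switch f (f u) x w))
      \<le> (\<Sum>x\<in>V. \<Sum>y\<in>V. \<Sum>w\<in>V. ?m x y w + ?m y x w + ?m w x y)"
    by (intro sum_mono)
  also have "\<dots> = (\<Sum>x\<in>V. \<Sum>y\<in>V. \<Sum>w\<in>V. ?m x y w) + (\<Sum>x\<in>V. \<Sum>y\<in>V. \<Sum>w\<in>V. ?m y x w)
      + (\<Sum>x\<in>V. \<Sum>y\<in>V. \<Sum>w\<in>V. ?m w x y)"
    by (simp only: sum.distrib)
  also have "(\<Sum>x\<in>V. \<Sum>y\<in>V. \<Sum>w\<in>V. ?m y x w) = (\<Sum>y\<in>V. \<Sum>x\<in>V. \<Sum>w\<in>V. ?m y x w)"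
    by (rule sum.swap)
  also have "(\<Sum>x\<in>V. \<Sum>y\<in>V. \<Sum>w\<in>V. ?m w x y) = (\<Sum>x\<in>V. \<Sum>w\<in>V. \<Sum>y\<in>V. ?m w x y)"
    by (intro sum.cong refl sum.swap)
  also have "\<dots> = (\<Sum>w\<in>V. \<Sum>x\<in>V. \<Sum>y\<in>V. ?m w x y)"
    by (rule sum.swap)
  finally show ?thesis by simp
qed

lemma switch_update_bad_pair:
  assumes sym: "\<And>x y. f x y = f y x"
    and "x \<noteq> y" and bad: "switch f ((f u)(u := c)) x y \<noteq> c"
  shows "switch f (f u) z x \<noteq> c \<or> switch f (f u) x z \<noteq> switch f (f u) x y"
proof -
  have "x \<noteq> u" "y \<noteq> u"
    using \<open>x \<noteq> y\<close> bad sym[of x u] by (auto simp: switch_def)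
  then have "switch f (f u) x y \<noteq> c"
    using bad by (simp add: switch_def)
  moreover have "switch f (f u) z x = switch f (f u) x z"
    using sym[of z x] by (auto simp: switch_def)
  ultimately show ?thesis by blast
qed

lemma ex_switching_approximation:
  assumes "finite V" "V \<noteq> {}" and sym: "\<And>x y. f x y = f y x"
  shows "\<exists>\<sigma> c. card V ^ 2 * (\<Sum>x\<in>V. \<Sum>y\<in>V. of_bool (x \<noteq> y \<and> switch f \<sigma> x y \<noteq> c))
    \<le> 6 * mismatches V E f"
proof -
  let ?n = "card V"
  define m where "m u = (\<Sum>x\<in>V. \<Sum>y\<in>V. \<Sum>w\<in>V. of_bool (mismatch4 E f u x y w) :: nat)" for u
  have "mismatches V E f = sum m V"
    by (simp add: mismatches_def m_def)
  then obtain u where u: "?n * m u \<le> mismatches V E f"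
    using ex_le_average[OF assms(1,2), of m] by auto
  define g where "g = switch f (f u)"
  define T where "T = (\<Sum>x\<in>V. \<Sum>y\<in>V. \<Sum>w\<in>V. of_bool (g x y \<noteq> g x w) :: nat)"
  have T: "T \<le> 3 * m u"
    unfolding T_def g_def m_def by (rule sum_switch_disagreements_le)
  define K where "K z = (\<Sum>y\<in>V. \<Sum>w\<in>V. of_bool (g z y \<noteq> g z w))
      + (\<Sum>x\<in>V. \<Sum>y\<in>V. of_bool (g x z \<noteq> g x y) :: nat)" for z
  have "sum K V = 2 * T"
    unfolding K_def T_def sum.distrib by (subst (2) sum.swap) simp
  then obtain z where z: "?n * K z \<le> 2 * T"
    using ex_le_average[OF assms(1,2), of K] by auto
  obtain c where c: "?n * card {y \<in> V. g z y \<noteq> c} \<le> (\<Sum>y\<in>V. \<Sum>w\<in>V. of_bool (g z y \<noteq> g z w))"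
    using ex_minority_bound[OF assms(1)] by blast
  text \<open>The switched graph \<open>g\<close> is nearly constant with value \<open>c\<close>; redefining \<open>\<sigma>\<close> at \<open>u\<close>
    keeps pairs through \<open>u\<close> from being bad.\<close>
  define \<sigma> where "\<sigma> = (f u)(u := c)"
  have "of_bool (x \<noteq> y \<and> switch f \<sigma> x y \<noteq> c) \<le> (of_bool (g z x \<noteq> c) + of_bool (g x z \<noteq> g x y) :: nat)"
    for x y
    using switch_update_bad_pair[where f = f and u = u and c = c and z = z and x = x and y = y, OF sym]
    unfolding g_def \<sigma>_def by auto
  then have "(\<Sum>x\<in>V. \<Sum>y\<in>V. of_bool (x \<noteq> y \<and> switch f \<sigma> x y \<noteq> c))
      \<le> (\<Sum>x\<in>V. \<Sum>y\<in>V. of_bool (g z x \<noteq> c) + of_bool (g x z \<noteq> g x y) :: nat)"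
    by (intro sum_mono)
  also have "\<dots> = ?n * card {x \<in> V. g z x \<noteq> c} + (\<Sum>x\<in>V. \<Sum>y\<in>V. of_bool (g x z \<noteq> g x y))"
    using assms(1) by (simp add: sum.distrib sum_of_bool_eq Int_def)
  also have "\<dots> \<le> K z"
    using c by (simp add: K_def)
  finally have "?n ^ 2 * (\<Sum>x\<in>V. \<Sum>y\<in>V. of_bool (x \<noteq> y \<and> switch f \<sigma> x y \<noteq> c)) \<le> ?n * (?n * K z)"
    by (simp add: power2_eq_square mult.assoc mult_left_mono)
  also have "\<dots> \<le> ?n * (6 * m u)"
    using z T by (intro mult_left_mono) linarith+
  also have "\<dots> \<le> 6 * mismatches V E f"
    using u by simp
  finally show ?thesis by blast
qed

lemma good4_parity:
  assumes "distinct [w, x, y, z]" "{w, x, y, z} \<subseteq> V"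
  shows "good4 {v \<in> V. \<sigma> v} {v \<in> V. \<not> \<sigma> v} {w, x, y, z} \<longleftrightarrow> ((\<sigma> w \<noteq> \<sigma> x) \<noteq> (\<sigma> y \<noteq> \<sigma> z))"
  using assms
  by (cases "\<sigma> w"; cases "\<sigma> x"; cases "\<sigma> y"; cases "\<sigma> z")
    (auto simp: good4_def Int_insert_left card_insert_if)

lemma incorrect4_obtain_bad_quadruple:
  assumes "S \<subseteq> V" "card S = 4" "\<not> correct4 {v \<in> V. \<sigma> v} {v \<in> V. \<not> \<sigma> v} E S"
  obtains w x y z where "S = {w, x, y, z}"
    "mismatch4 E f w x y z \<or> (w \<noteq> x \<and> switch f \<sigma> w x \<noteq> c) \<or> (y \<noteq> z \<and> switch f \<sigma> y z \<noteq> c)"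
proof -
  obtain w x y z where wxyz: "S = {w, x, y, z}" "distinct [w, x, y, z]"
    using card_eq_4E[OF assms(2)] by blast
  have "mismatch4 E f w x y z \<or> (w \<noteq> x \<and> switch f \<sigma> w x \<noteq> c) \<or> (y \<noteq> z \<and> switch f \<sigma> y z \<noteq> c)"
  proof (rule ccontr)
    assume "\<not> ?thesis"
    with wxyz(2) have "({w, x, y, z} \<in> E) = ((\<sigma> w \<noteq> \<sigma> x) \<noteq> (\<sigma> y \<noteq> \<sigma> z))"
      by (auto simp: mismatch4_def switch_def)
    then have "correct4 {v \<in> V. \<sigma> v} {v \<in> V. \<not> \<sigma> v} E S"
      using good4_parity[OF wxyz(2), of V \<sigma>] assms(1) by (auto simp: correct4_def wxyz(1))
    with assms(3) show False by contradiction
  qed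
  with wxyz(1) show ?thesis by (rule that)
qed

lemma card_incorrect_le:
  assumes "finite V"
  shows "card {S. S \<subseteq> V \<and> card S = 4 \<and> \<not> correct4 {v \<in> V. \<sigma> v} {v \<in> V. \<not> \<sigma> v} E S}
    \<le> mismatches V E f + 2 * (card V ^ 2 * (\<Sum>x\<in>V. \<Sum>y\<in>V. of_bool (x \<noteq> y \<and> switch f \<sigma> x y \<noteq> c)))"
    (is "card ?Inc \<le> _ + 2 * (_ * ?Bd)")
proof -
  let ?bad = "\<lambda>x y. x \<noteq> y \<and> switch f \<sigma> x y \<noteq> c"
  let ?bad4 = "\<lambda>w x y z. mismatch4 E f w x y z \<or> ?bad w x \<or> ?bad y z"
  define Bad where "Bad = (V \<times> V) \<times> (V \<times> V) \<inter> {((w, x), (y, z)). ?bad4 w x y z}"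
  have "?Inc \<subseteq> (\<lambda>((w, x), (y, z)). {w, x, y, z}) ` Bad"
  proof
    fix S assume "S \<in> ?Inc"
    then have S: "S \<subseteq> V" "card S = 4" "\<not> correct4 {v \<in> V. \<sigma> v} {v \<in> V. \<not> \<sigma> v} E S"
      by auto
    obtain w x y z where wxyz: "S = {w, x, y, z}" and "?bad4 w x y z"
      by (rule incorrect4_obtain_bad_quadruple[OF S])
    then have "((w, x), (y, z)) \<in> Bad"
      using S(1) by (simp add: Bad_def)
    then show "S \<in> (\<lambda>((w, x), (y, z)). {w, x, y, z}) ` Bad"
      using wxyz by force
  qed
  moreover have "finite Bad" using assms by (simp add: Bad_def)
  ultimately have "card ?Inc \<le> card ((\<lambda>((w, x), (y, z)). {w, x, y, z}) ` Bad)"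
    by (intro card_mono) auto
  also have "\<dots> \<le> card Bad"
    using \<open>finite Bad\<close> by (rule card_image_le)
  also have "card Bad = (\<Sum>t\<in>(V \<times> V) \<times> (V \<times> V). of_bool (t \<in> {((w, x), (y, z)). ?bad4 w x y z}))"
    unfolding Bad_def using assms by (subst sum_of_bool_eq) auto
  also have "\<dots> = (\<Sum>w\<in>V. \<Sum>x\<in>V. \<Sum>y\<in>V. \<Sum>z\<in>V. of_bool (?bad4 w x y z))"
    by (simp only: sum.cartesian_product' sum_square_cartesian) simp
  also have "\<dots> \<le> (\<Sum>w\<in>V. \<Sum>x\<in>V. \<Sum>y\<in>V. \<Sum>z\<in>V.
      of_bool (mismatch4 E f w x y z) + of_bool (?bad w x) + of_bool (?bad y z))"
    by (intro sum_mono) auto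
  also have "\<dots> = mismatches V E f + card V ^ 2 * ?Bd + card V ^ 2 * ?Bd"
    by (simp add: mismatches_def sum.distrib sum_distrib_left power2_eq_square mult.assoc)
  finally show ?thesis by simp
qed

lemma ex_partition_few_incorrect:
  assumes "uniform4 V E" "\<not> contains_C3 E" "V \<noteq> {}"
  shows "\<exists>V1 V2. V1 \<union> V2 = V \<and> V1 \<inter> V2 = {} \<and>
    real (card {S. S \<subseteq> V \<and> card S = 4 \<and> \<not> correct4 V1 V2 E S})
      \<le> 936 * (real (card V) ^ 4 / 48 - real (card E))"
proof -
  have "finite V" using assms(1) by (simp add: uniform4_def)
  obtain f where sym: "\<forall>x y. f x y = f y x"
    and f: "2 * mismatches V E f + 144 * card E \<le> 3 * card V ^ 4"
    using ex_link_graph_few_mismatches[OF assms] by blast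
  obtain \<sigma> c where \<sigma>: "card V ^ 2 * (\<Sum>x\<in>V. \<Sum>y\<in>V. of_bool (x \<noteq> y \<and> switch f \<sigma> x y \<noteq> c))
      \<le> 6 * mismatches V E f"
    using ex_switching_approximation[OF \<open>finite V\<close> assms(3)] sym by blast
  let ?V1 = "{v \<in> V. \<sigma> v}" and ?V2 = "{v \<in> V. \<not> \<sigma> v}"
  let ?Inc = "{S. S \<subseteq> V \<and> card S = 4 \<and> \<not> correct4 ?V1 ?V2 E S}"
  have "2 * card ?Inc + 1872 * card E \<le> 39 * card V ^ 4"
    using card_incorrect_le[OF \<open>finite V\<close>, of \<sigma> E f c] f \<sigma> by linarith
  then have "real (2 * card ?Inc + 1872 * card E) \<le> real (39 * card V ^ 4)"
    by (simp only: of_nat_le_iff)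
  then have "real (card ?Inc) \<le> 936 * (real (card V) ^ 4 / 48 - real (card E))"
    by (simp add: field_simps)
  moreover have "?V1 \<union> ?V2 = V" "?V1 \<inter> ?V2 = {}" by auto
  ultimately show ?thesis by blast
qed

lemma card_B_edges:
  assumes "k \<le> n"
  shows "card (B_edges n k) = k * ((n - k) choose 3) + (k choose 3) * (n - k)"
proof -
  let ?L = "{..<k}" and ?R = "{k..<n}"
  let ?split = "\<lambda>i j. {S. S \<subseteq> ?L \<union> ?R \<and> card (S \<inter> ?L) = i \<and> card (S \<inter> ?R) = j}"
  have LR: "?L \<union> ?R = {..<n}" "?L \<inter> ?R = {}" using assms by auto
  have "card S = card (S \<inter> ?L) + card (S \<inter> ?R)" if "S \<subseteq> {..<n}" for S
  proof -
    have "finite S" using that finite_subset by blast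
    have "S = (S \<inter> ?L) \<union> (S \<inter> ?R)" using that LR by blast
    also have "card \<dots> = card (S \<inter> ?L) + card (S \<inter> ?R)"
      using \<open>finite S\<close> by (intro card_Un_disjoint) auto
    finally show ?thesis .
  qed
  then have "B_edges n k = ?split 1 3 \<union> ?split 3 1"
    using LR by (auto simp: B_edges_def good4_def)
  moreover have "?split 1 3 \<inter> ?split 3 1 = {}" by auto
  ultimately have "card (B_edges n k) = card (?split 1 3) + card (?split 3 1)"
    by (simp add: card_Un_disjoint)
  moreover have "card (?split i j) = (k choose i) * ((n - k) choose j)" for i j
    by (subst card_subsets_split) auto
  ultimately show ?thesis by (simp only:) simp
qed

lemma card_B_edges_le_b: "k \<le> n \<Longrightarrow> card (B_edges n k) \<le> b n"
  unfolding b_def by (rule Max_ge) auto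

lemma real_choose_3: "real (k choose 3) = real k * (real k - 1) * (real k - 2) / 6"
proof -
  have "real (k choose 3) = real k gchoose 3" by (simp add: binomial_gbinomial)
  also have "\<dots> = pochhammer (real k - 3 + 1) 3 / fact 3" by (simp add: gbinomial_pochhammer')
  also have "\<dots> = real k * (real k - 1) * (real k - 2) / 6"
    by (simp add: pochhammer_Suc numeral_3_eq_3 fact_numeral algebra_simps)
  finally show ?thesis .
qed

lemma b_lower_bound: "real n ^ 4 / 48 - real n ^ 3 / 8 \<le> real (b n)"
proof -
  define k where "k = n div 2"
  define K where "K = real k"
  have "k * ((n - k) choose 3) + (k choose 3) * (n - k) \<le> b n"
    using card_B_edges[of k n] card_B_edges_le_b[of k n] by (simp add: k_def)
  then have b: "real (k * ((n - k) choose 3) + (k choose 3) * (n - k)) \<le> real (b n)"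
    by (simp only: of_nat_le_iff)
  have "n = 2 * k \<or> n = 2 * k + 1" unfolding k_def by presburger
  then show ?thesis
  proof
    assume n: "n = 2 * k"
    then have "K * (K * (K - 1) * (K - 2) / 6) + K * (K - 1) * (K - 2) / 6 * K \<le> real (b n)"
      using b by (simp add: K_def real_choose_3 mult_2)
    moreover have "K * (K * (K - 1) * (K - 2) / 6) + K * (K - 1) * (K - 2) / 6 * K
        - (real n ^ 4 / 48 - real n ^ 3 / 8) = 2 * K ^ 2 / 3"
      by (simp add: n K_def field_simps power2_eq_square power3_eq_cube power4_eq_xxxx)
    moreover have "0 \<le> 2 * K ^ 2 / 3" by simp
    ultimately show ?thesis by linarith
  next
    assume n: "n = 2 * k + 1"
    then have "K * ((K + 1) * K * (K - 1) / 6) + K * (K - 1) * (K - 2) / 6 * (K + 1) \<le> real (b n)"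
      using b by (simp add: K_def real_choose_3 field_simps)
    moreover have "K * ((K + 1) * K * (K - 1) / 6) + K * (K - 1) * (K - 2) / 6 * (K + 1)
        - (real n ^ 4 / 48 - real n ^ 3 / 8) = (32 * K ^ 2 + 44 * K + 5) / 48"
      by (simp add: n K_def field_simps power2_eq_square power3_eq_cube power4_eq_xxxx)
    moreover have "0 \<le> (32 * K ^ 2 + 44 * K + 5) / 48" by (simp add: K_def)
    ultimately show ?thesis by linarith
  qed
qed

lemma ex_partition_few_incorrect_if_near_extremal:
  fixes \<epsilon> :: real
  assumes "uniform4 V E" "\<not> contains_C3 E" "\<epsilon> > 0" and large: "234 / \<epsilon> \<le> real (card V)"
    and many_edges: "real (card E) > real (b (card V)) - \<epsilon> / 1872 * real (card V) ^ 4"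
  shows "\<exists>V1 V2. V1 \<union> V2 = V \<and> V1 \<inter> V2 = {} \<and>
    real (card {S. S \<subseteq> V \<and> card S = 4 \<and> \<not> correct4 V1 V2 E S}) \<le> \<epsilon> * real (card V) ^ 4"
proof -
  let ?n = "real (card V)"
  have "V \<noteq> {}" using large \<open>\<epsilon> > 0\<close> by auto
  then obtain V1 V2 where "V1 \<union> V2 = V" "V1 \<inter> V2 = {}" and incorrect:
    "real (card {S. S \<subseteq> V \<and> card S = 4 \<and> \<not> correct4 V1 V2 E S}) \<le> 936 * (?n ^ 4 / 48 - real (card E))"
    using ex_partition_few_incorrect[OF assms(1,2)] by blast
  have "234 * ?n ^ 3 \<le> (\<epsilon> * ?n) * ?n ^ 3"
    using large \<open>\<epsilon> > 0\<close> by (intro mult_right_mono) (simp_all add: field_simps)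
  also have "\<dots> = \<epsilon> * ?n ^ 4"
    by (simp add: power4_eq_xxxx power3_eq_cube)
  finally have "real (card {S. S \<subseteq> V \<and> card S = 4 \<and> \<not> correct4 V1 V2 E S}) \<le> \<epsilon> * ?n ^ 4"
    using incorrect b_lower_bound[of "card V"] many_edges by (simp add: field_simps)
  with \<open>V1 \<union> V2 = V\<close> \<open>V1 \<inter> V2 = {}\<close> show ?thesis by blast
qed

theorem theorem3:
  shows "\<forall>\<epsilon>::real. \<epsilon> > 0 \<longrightarrow> (\<exists>\<eta>::real. \<eta> > 0 \<and> (\<exists>N::nat. \<forall>n\<ge>N.
      \<forall>(V::nat set) (E::nat set set).
        uniform4 V E \<and> card V = n \<and> \<not> contains_C3 E \<and>
        real (card E) > real (b n) - \<eta> * real n ^ 4 \<longrightarrow>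
        (\<exists>V1 V2. V1 \<union> V2 = V \<and> V1 \<inter> V2 = {} \<and>
           real (card {S. S \<subseteq> V \<and> card S = 4 \<and> \<not> correct4 V1 V2 E S}) \<le> \<epsilon> * real n ^ 4)))"
proof (intro allI impI)
  fix \<epsilon> :: real assume "\<epsilon> > 0"
  show "\<exists>\<eta>>0. \<exists>N. \<forall>n\<ge>N. \<forall>V E. uniform4 V E \<and> card V = n \<and> \<not> contains_C3 E \<and>
      real (card E) > real (b n) - \<eta> * real n ^ 4 \<longrightarrow> (\<exists>V1 V2. V1 \<union> V2 = V \<and> V1 \<inter> V2 = {} \<and>
      real (card {S. S \<subseteq> V \<and> card S = 4 \<and> \<not> correct4 V1 V2 E S}) \<le> \<epsilon> * real n ^ 4)"
  proof (intro exI[of _ "\<epsilon> / 1872"] conjI exI[of _ "nat \<lceil>234 / \<epsilon>\<rceil>"] allI impI)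
    show "\<epsilon> / 1872 > 0" using \<open>\<epsilon> > 0\<close> by simp
    fix n V E
    assume "nat \<lceil>234 / \<epsilon>\<rceil> \<le> n" and "uniform4 V E \<and> card V = n \<and> \<not> contains_C3 E \<and>
      real (card E) > real (b n) - \<epsilon> / 1872 * real n ^ 4"
    moreover have "234 / \<epsilon> \<le> real (nat \<lceil>234 / \<epsilon>\<rceil>)" by (rule real_nat_ceiling_ge)
    ultimately show "\<exists>V1 V2. V1 \<union> V2 = V \<and> V1 \<inter> V2 = {} \<and>
        real (card {S. S \<subseteq> V \<and> card S = 4 \<and> \<not> correct4 V1 V2 E S}) \<le> \<epsilon> * real n ^ 4"
      using ex_partition_few_incorrect_if_near_extremal[OF _ _ \<open>\<epsilon> > 0\<close>, of V E] by auto
  qed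
qed

end
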